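(* Let $F_1(v)=\frac{1-e^{-v}}{v}=\int_0^1 e^{-vu}\,du$ for real $v$ (so $F_1(0)=1$), and for $j\in\mathbb{N}$ let $G_j(v)=\frac{v^j}{1-e^{-v}}$ for real $v\neq0$, extended by $G_j(0)=1$ if $j=1$ and $G_j(0)=0$ if $j>1$; let $f_j(v)=G_j^{(j)}(v)$. Then: (1) $F_1^{(k)}(0)=\frac{(-1)^k}{k+1}$ for all $k\ge0$. (2) For $k\ge0$ and $j\in\mathbb{N}$, \[ G_j^{(k)}(0)=\begin{cases}0, & k<j-1;\\[2pt] (-1)^{k-j+1}k!\,(k-j+2)!\displaystyle\sum_{q=0}^{k-j+1}\frac{(-1)^{q}}{q+1}\,\frac{S(k-j+q+1,q)}{(k-j-q+1)!\,(k-j+q+1)!}, & k\ge j-1.\end{cases} \] In particular, for $j\in\mathbb{N}$, \[ G_j^{(j-1)}(0)=(j-1)!,\quad G_j^{(j)}(0)=f_j(0)=\frac{j!}{2},\quad G_j^{(j+1)}(0)=f_j'(0)=\frac{(j+1)!}{12},\quad G_j^{(j+2)}(0)=0. \] (3) For $j\in\mathbb{N}$, the Maclaurin power series of $f_j$ is \[ f_j(v)=\sum_{i=0}^{\infty}(-1)^{i+1}(i+1)(i+2)(j+i)!\Biggl[\sum_{q=0}^{i+1}\frac{(-1)^{q}}{q+1}\,\frac{S(i+q+1,q)}{(i-q+1)!\,(i+q+1)!}\Biggr]v^i. \]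
   Context: $\mathbb{N}=\{1,2,3,\dots\}$. $S(n,k)$ denotes the Stirling numbers of the second kind, defined by $\frac{(e^v-1)^k}{k!}=\sum_{n=k}^\infty S(n,k)\frac{v^n}{n!}$ (so $S(0,0)=1$ and $S(n,0)=0$ for $n\ge1$). The function $G_j$ as defined is real-analytic on $(-2\pi,2\pi)$, so its derivatives at $0$ make sense. *)

theory Defs
  imports "HOL-Analysis.Analysis" "HOL-Combinatorics.Stirling"
begin

definition F1 :: "real \<Rightarrow> real" where
  "F1 v = (if v = 0 then 1 else (1 - exp (- v)) / v)"

definition G :: "nat \<Rightarrow> real \<Rightarrow> real" where
  "G j v = (if v = 0 then (if j = 1 then 1 else 0) else v ^ j / (1 - exp (- v)))"

definition f :: "nat \<Rightarrow> real \<Rightarrow> real" where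
  "f j = (deriv ^^ j) (G j)"

end

theory Submission
  imports Defs "HOL-Complex_Analysis.Complex_Analysis"
begin

text \<open>The function \<open>F\<^sub>1(z) = (1 - e^(-z))/z\<close> is entire and its zeros are the points
  \<open>2\<pi>ik\<close> with \<open>k \<noteq> 0\<close>, so \<open>G\<^sub>j(z) = z^(j-1)/F\<^sub>1(z)\<close> is holomorphic on the disc
  \<open>|z| < 2\<pi>\<close>. The real derivatives of \<open>F\<^sub>1\<close> and \<open>G\<^sub>j\<close> are the complex ones restricted to
  the real line, so their values at 0 are \<open>k!\<close> times power series coefficients, and Taylor's
  theorem on the disc gives the series for \<open>f\<^sub>j\<close> on \<open>(-2\<pi>, 2\<pi>)\<close>.
  The coefficients come from formal power series: since \<open>(e^X - 1)^r / r!\<close> is the exponential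
  generating function of \<open>S(n, r)\<close>, the powers of \<open>F\<^sub>1 = (1 - e^(-X))/X\<close> have Stirling numbers as
  coefficients, and expanding \<open>1/F\<^sub>1 = \<Sum>\<^sub>q (1 - F\<^sub>1)^q\<close> binomially gives the coefficients of
  \<open>1/F\<^sub>1\<close> as the Stirling sums of the statement.\<close>

unbundle no vec_syntax

section \<open>Formal power series\<close>

lemma fps_inverse_nth_geometric:
  fixes F :: "'a::field fps"
  assumes "F $ 0 = 1"
  shows "inverse F $ m = (\<Sum>q\<le>m. ((1 - F) ^ q) $ m)"
proof -
  have "F = (1 - fps_X) oo (1 - F)"
    using assms by (simp add: fps_compose_sub_distrib)
  hence "inverse F = inverse (1 - fps_X) oo (1 - F)"
    using assms by (simp add: fps_inverse_compose)
  also have "inverse (1 - fps_X) = Abs_fps (\<lambda>_. 1 :: 'a)"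
    using fps_inverse_idempotent[of "Abs_fps (\<lambda>_. 1 :: 'a)"] by (simp add: fps_inverse_gp')
  finally show ?thesis by (simp add: fps_compose_nth atLeast0AtMost)
qed

lemma one_minus_fps_power_nth:
  fixes F :: "'a::comm_ring_1 fps"
  shows "((1 - F) ^ q) $ m = (\<Sum>r\<le>q. (-1) ^ r * of_nat (q choose r) * (F ^ r) $ m)"
proof -
  have "(1 - F) ^ q = (\<Sum>r\<le>q. of_nat (q choose r) * (- F) ^ r)"
    using binomial_ring[of "- F" 1 q] by simp
  also have "\<dots> = (\<Sum>r\<le>q. fps_const ((-1) ^ r * of_nat (q choose r)) * F ^ r)"
  proof (intro sum.cong refl)
    fix r
    have "(- F) ^ r = fps_const ((- 1) ^ r) * F ^ r"
      unfolding power_minus[of F] by (simp only: fps_const_power[symmetric] fps_const_neg[symmetric] fps_const_1_eq_1)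
    thus "of_nat (q choose r) * (- F) ^ r = fps_const ((-1) ^ r * of_nat (q choose r)) * F ^ r"
      by (simp add: fps_of_nat[symmetric] mult_ac)
  qed
  finally show ?thesis by (simp add: fps_sum_nth)
qed

lemma fps_inverse_nth_binomial:
  fixes F :: "'a::field fps"
  assumes "F $ 0 = 1"
  shows "inverse F $ m = (\<Sum>r\<le>m. (-1) ^ r * of_nat (Suc m choose Suc r) * (F ^ r) $ m)"
proof -
  have "inverse F $ m = (\<Sum>q\<le>m. \<Sum>r\<le>m. (-1) ^ r * of_nat (q choose r) * (F ^ r) $ m)"
    unfolding fps_inverse_nth_geometric[OF assms] one_minus_fps_power_nth
    by (intro sum.cong refl sum.mono_neutral_left) (auto simp: binomial_eq_0)
  also have "\<dots> = (\<Sum>r\<le>m. (-1) ^ r * of_nat (\<Sum>q\<le>m. q choose r) * (F ^ r) $ m)"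
    by (subst sum.swap) (simp add: sum_distrib_left sum_distrib_right)
  finally show ?thesis by (simp only: sum_choose_upper)
qed

lemma fps_exp_minus_one_power_nth:
  fixes c :: "'a::field_char_0"
  shows "((fps_exp c - 1) ^ r) $ n = c ^ n * fact r * of_nat (Stirling n r) / fact n"
proof (induction r arbitrary: n)
  case 0
  then show ?case by (cases n) auto
next
  case (Suc r)
  note IH_r = Suc.IH
  let ?A = "fps_exp c - 1"
  have "fps_deriv ?A = fps_const c * (?A + 1)"
    by simp
  \<comment> \<open>the recurrence \<open>S(n+1, r+1) = (r+1) S(n, r+1) + S(n, r)\<close> in disguise\<close>
  hence deriv_power: "fps_deriv (?A ^ Suc r) = fps_const (of_nat (Suc r) * c) * (?A ^ Suc r + ?A ^ r)"
    unfolding fps_deriv_power by (simp add: algebra_simps fps_const_mult[symmetric] del: fps_const_mult)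
  show ?case
  proof (induction n)
    case 0
    then show ?case by (simp add: fps_nth_power_0)
  next
    case (Suc n)
    have "of_nat (Suc n) * (?A ^ Suc r) $ Suc n = fps_deriv (?A ^ Suc r) $ n"
      by (simp only: fps_deriv_nth Suc_eq_plus1)
    also have "\<dots> = of_nat (Suc r) * c * ((?A ^ Suc r) $ n + (?A ^ r) $ n)"
      by (simp only: deriv_power fps_mult_left_const_nth fps_add_nth)
    also have "\<dots> = of_nat (Suc n) * (c ^ Suc n * fact (Suc r) * of_nat (Stirling (Suc n) (Suc r)) / fact (Suc n))"
      unfolding Suc.IH IH_r
      by (simp add: divide_simps del: of_nat_Suc) (simp add: algebra_simps)
    finally show ?case
      by (metis mult_cancel_left of_nat_neq_0)
  qed
qed

definition F1_fps :: "'a::field_char_0 fps" where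
  "F1_fps = fps_shift 1 (1 - fps_exp (-1))"

lemma F1_fps_nth: "(F1_fps :: 'a::field_char_0 fps) $ n = (-1) ^ n / fact (Suc n)"
  by (simp add: F1_fps_def algebra_simps)

lemma fps_X_mult_F1_fps: "fps_X * (F1_fps :: 'a::field_char_0 fps) = 1 - fps_exp (-1)"
proof (rule fps_ext)
  show "(fps_X * F1_fps) $ n = (1 - fps_exp (-1) :: 'a fps) $ n" for n
    by (cases n) (simp_all add: F1_fps_nth algebra_simps)
qed

lemma F1_fps_power_nth:
  "((F1_fps :: 'a::field_char_0 fps) ^ r) $ n = (-1) ^ n * fact r * of_nat (Stirling (n + r) r) / fact (n + r)"
proof -
  have "((F1_fps :: 'a fps) ^ r) $ n = (fps_X ^ r * F1_fps ^ r) $ (n + r)"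
    by (simp add: fps_X_power_mult_nth)
  also have "fps_X ^ r * F1_fps ^ r = (fps_const (-1) * (fps_exp (-1) - 1) :: 'a fps) ^ r"
  proof -
    have "1 - fps_exp (-1) = fps_const (-1) * (fps_exp (-1) - 1 :: 'a fps)"
      by (rule fps_ext) simp
    thus ?thesis by (simp only: fps_X_mult_F1_fps power_mult_distrib[symmetric])
  qed
  also have "\<dots> = fps_const ((-1) ^ r) * (fps_exp (-1) - 1) ^ r"
    by (simp only: power_mult_distrib fps_const_power)
  finally show ?thesis
    by (simp add: fps_exp_minus_one_power_nth power_add)
qed

text \<open>The coefficients \<open>B\<^sub>m\<^sup>+ / m!\<close> of the Todd series \<open>v / (1 - e^(-v)) = 1 / F\<^sub>1(v)\<close>,
  written as the Stirling sums of the statement.\<close>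
definition todd_coeff :: "nat \<Rightarrow> real" where
  "todd_coeff m = (-1) ^ m * fact (m + 1) * (\<Sum>q = 0..m. (-1) ^ q / real (q + 1) *
                     real (Stirling (m + q) q) / (fact (m - q) * fact (m + q)))"

lemma todd_coeff_binomial:
  "todd_coeff m = (\<Sum>r\<le>m. (-1) ^ r * real (Suc m choose Suc r) *
                     ((-1) ^ m * fact r * real (Stirling (m + r) r) / fact (m + r)))"
  unfolding todd_coeff_def sum_distrib_left atLeast0AtMost
proof (intro sum.cong refl)
  fix q assume "q \<in> {..m}"
  hence "fact (Suc q) * fact (Suc m - Suc q) * real (Suc m choose Suc q) = fact (Suc m)"
    using binomial_fact_lemma[of "Suc q" "Suc m"] by (metis Suc_le_mono atMost_iff of_nat_fact of_nat_mult)
  hence fact_Suc_m: "fact (m + 1) = real (q + 1) * fact q * fact (m - q) * real (Suc m choose Suc q)"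
    by simp
  show "(-1) ^ m * fact (m + 1) * ((-1) ^ q / real (q + 1) * real (Stirling (m + q) q) / (fact (m - q) * fact (m + q))) =
        (-1) ^ q * real (Suc m choose Suc q) * ((-1) ^ m * fact q * real (Stirling (m + q) q) / fact (m + q))"
    unfolding fact_Suc_m by (simp add: field_simps del: binomial_Suc_Suc of_nat_Suc)
qed

lemma inverse_F1_fps_nth: "inverse (F1_fps :: 'a::real_field fps) $ m = of_real (todd_coeff m)"
  by (simp add: fps_inverse_nth_binomial F1_fps_nth F1_fps_power_nth todd_coeff_binomial
      del: binomial_Suc_Suc)

lemma todd_coeff_0: "todd_coeff 0 = 1"
  by (simp add: todd_coeff_def)

lemma todd_coeff_1: "todd_coeff 1 = 1 / 2"
  by (simp add: todd_coeff_def numeral_eq_Suc atLeast0AtMost)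

lemma todd_coeff_2: "todd_coeff 2 = 1 / 12"
  by (simp add: todd_coeff_def numeral_eq_Suc atLeast0AtMost)

lemma todd_coeff_3: "todd_coeff 3 = 0"
  by (simp add: todd_coeff_def numeral_eq_Suc atLeast0AtMost)

section \<open>Holomorphic extensions\<close>

lemma higher_deriv_of_real_restriction:
  fixes H :: "complex \<Rightarrow> complex" and h :: "real \<Rightarrow> real"
  assumes holo: "H holomorphic_on ball 0 r"
    and restr: "\<And>x. \<bar>x\<bar> < r \<Longrightarrow> H (of_real x) = of_real (h x)"
    and "\<bar>x\<bar> < r"
  shows "(deriv ^^ k) H (of_real x) = of_real ((deriv ^^ k) h x)"
  using \<open>\<bar>x\<bar> < r\<close>
proof (induction k arbitrary: x)
  case 0
  then show ?case using restr by simp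
next
  case (Suc k)
  let ?D = "(deriv ^^ k) H" and ?d = "(deriv ^^ k) h"
  let ?D' = "deriv ?D (of_real x)"
  have "?D holomorphic_on ball 0 r"
    by (rule holomorphic_higher_deriv[OF holo]) auto
  hence "(?D has_field_derivative ?D') (at (of_real x))"
    by (rule holomorphic_derivI) (use Suc.prems in auto)
  hence "((\<lambda>t. ?D (of_real t)) has_vector_derivative ?D') (at x)"
    by (rule has_vector_derivative_real_field)
  hence complex_deriv: "((\<lambda>t. complex_of_real (?d t)) has_vector_derivative ?D') (at x)"
    by (rule has_vector_derivative_transform_within_open[of _ _ _ "{-r<..<r}"])
       (use Suc.prems Suc.IH in \<open>auto simp: abs_less_iff\<close>)
  have "((\<lambda>t. Re (complex_of_real (?d t))) has_vector_derivative Re ?D') (at x)"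
    by (rule bounded_linear.has_vector_derivative[OF bounded_linear_Re complex_deriv])
  hence real_deriv: "(?d has_real_derivative Re ?D') (at x)"
    by (simp add: has_real_derivative_iff_has_vector_derivative)
  hence "((\<lambda>t. complex_of_real (?d t)) has_vector_derivative of_real (Re ?D')) (at x)"
    by (rule has_vector_derivative_of_real)
  \<comment> \<open>the complex derivative is the derivative of a real-valued function, hence real\<close>
  hence "?D' = of_real (Re ?D')"
    by (rule vector_derivative_unique_at[OF complex_deriv])
  with DERIV_imp_deriv[OF real_deriv] show ?case
    by simp
qed

definition F1_complex :: "complex \<Rightarrow> complex" where
  "F1_complex z = (if z = 0 then 1 else (1 - exp (- z)) / z)"

lemma F1_complex_of_real: "F1_complex (of_real x) = of_real (F1 x)"
  by (simp add: F1_complex_def F1_def exp_of_real[symmetric])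

lemma F1_complex_has_fps_expansion: "F1_complex has_fps_expansion F1_fps"
proof -
  have "1 \<le> subdegree (1 - fps_exp (-1) :: complex fps)"
  proof (rule subdegree_geI)
    show "(1 - fps_exp (-1) :: complex fps) \<noteq> 0"
    proof
      assume "(1 - fps_exp (-1) :: complex fps) = 0"
      hence "(1 - fps_exp (-1) :: complex fps) $ 1 = 0" by simp
      thus False by simp
    qed
  qed simp
  moreover have "(\<lambda>z::complex. 1 - exp (- z)) has_fps_expansion 1 - fps_exp (-1)"
    by (intro fps_expansion_intros)
  ultimately have
    "(\<lambda>z. if z = 0 then (1 - fps_exp (-1::complex)) $ 1 else (1 - exp (- z)) / z ^ 1)
          has_fps_expansion F1_fps"
    unfolding F1_fps_def by (intro has_fps_expansion_shift) auto
  also have "(\<lambda>z. if z = 0 then (1 - fps_exp (-1::complex)) $ 1 else (1 - exp (- z)) / z ^ 1) = F1_complex"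
    by (auto simp: F1_complex_def)
  finally show ?thesis .
qed

lemma holomorphic_F1_complex: "F1_complex holomorphic_on UNIV"
proof -
  have "deriv (\<lambda>z::complex. 1 - exp (- z)) 0 = 1"
    by (rule DERIV_imp_deriv) (auto intro!: derivative_eq_intros)
  hence "F1_complex = (\<lambda>z. if z = 0 then deriv (\<lambda>z. 1 - exp (- z)) 0
                         else ((1 - exp (- z)) - (1 - exp (- 0))) / (z - 0))"
    by (auto simp: F1_complex_def)
  moreover have "\<dots> holomorphic_on UNIV"
    by (rule pole_lemma) (auto intro!: holomorphic_intros)
  ultimately show ?thesis by simp
qed

lemma F1_complex_nonzero:
  assumes "norm z < 2 * pi"
  shows "F1_complex z \<noteq> 0"
proof
  assume "F1_complex z = 0"
  then obtain n :: int where "z \<noteq> 0" and "Re z = 0" and "- Im z = 2 * of_int n * pi"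
    by (auto simp: F1_complex_def exp_eq_1 split: if_splits)
  moreover have "\<bar>Im z\<bar> < 2 * pi"
    using abs_Im_le_cmod[of z] assms by linarith
  ultimately have "\<bar>2 * of_int n * pi\<bar> < 2 * pi"
    by (metis abs_minus_cancel)
  hence "\<bar>of_int n :: real\<bar> < 1"
    using pi_gt_zero by (simp add: abs_mult)
  hence "n = 0" by linarith
  with \<open>z \<noteq> 0\<close> \<open>Re z = 0\<close> \<open>- Im z = _\<close> show False
    by (simp add: complex_eq_iff)
qed

definition G_complex :: "nat \<Rightarrow> complex \<Rightarrow> complex" where
  "G_complex j z = z ^ (j - 1) * inverse (F1_complex z)"

lemma G_complex_of_real:
  assumes "j \<ge> 1"
  shows "G_complex j (of_real x) = of_real (G j x)"
proof (cases "x = 0")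
  case True
  thus ?thesis using assms by (simp add: G_complex_def F1_complex_def G_def)
next
  case False
  moreover have "x ^ j = x ^ (j - 1) * x"
    using assms by (simp add: power_eq_if)
  ultimately show ?thesis
    by (simp add: G_complex_def F1_complex_def G_def exp_of_real[symmetric])
qed

lemma G_complex_has_fps_expansion: "G_complex j has_fps_expansion fps_X ^ (j - 1) * inverse F1_fps"
  unfolding G_complex_def[abs_def]
  by (intro has_fps_expansion_mult has_fps_expansion_fps_X_power has_fps_expansion_inverse
      F1_complex_has_fps_expansion) (simp add: F1_fps_nth)

lemma holomorphic_G_complex: "G_complex j holomorphic_on ball 0 (2 * pi)"
  unfolding G_complex_def[abs_def]
  by (intro holomorphic_intros holomorphic_on_subset[OF holomorphic_F1_complex])
     (auto simp: F1_complex_nonzero)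

section \<open>Derivatives at the origin\<close>

lemma higher_deriv_F1_0: "(deriv ^^ k) F1 0 = (-1) ^ k / real (k + 1)"
proof -
  have "complex_of_real ((deriv ^^ k) F1 0) = (deriv ^^ k) F1_complex 0"
    using higher_deriv_of_real_restriction[of F1_complex 1 F1 0 k]
    by (simp add: holomorphic_on_subset[OF holomorphic_F1_complex] F1_complex_of_real)
  also have "\<dots> = fact k * F1_fps $ k"
    by (simp add: fps_nth_fps_expansion[OF F1_complex_has_fps_expansion])
  also have "\<dots> = complex_of_real ((-1) ^ k / real (k + 1))"
    by (simp add: F1_fps_nth del: of_nat_Suc)
  finally show ?thesis
    by (simp only: of_real_eq_iff)
qed

lemma higher_deriv_G_eq_complex:
  assumes "j \<ge> 1" and "\<bar>x\<bar> < 2 * pi"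
  shows "(deriv ^^ k) (G_complex j) (of_real x) = of_real ((deriv ^^ k) (G j) x)"
  using assms by (intro higher_deriv_of_real_restriction[OF holomorphic_G_complex] G_complex_of_real)

lemma higher_deriv_G_0:
  assumes "j \<ge> 1"
  shows "(deriv ^^ k) (G j) 0 = (if k < j - 1 then 0 else fact k * todd_coeff (k + 1 - j))"
proof -
  have "complex_of_real ((deriv ^^ k) (G j) 0) = (deriv ^^ k) (G_complex j) 0"
    using higher_deriv_G_eq_complex[OF assms, of 0] by simp
  also have "\<dots> = fact k * (fps_X ^ (j - 1) * inverse F1_fps) $ k"
    using fps_nth_fps_expansion[OF G_complex_has_fps_expansion, of j k] by simp
  also have "\<dots> = complex_of_real (if k < j - 1 then 0 else fact k * todd_coeff (k + 1 - j))"
    using assms by (simp add: fps_X_power_mult_nth inverse_F1_fps_nth)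
  finally show ?thesis
    by (simp only: of_real_eq_iff)
qed

lemma higher_deriv_G_0_low_orders:
  assumes "j \<ge> 1"
  shows "(deriv ^^ (j - 1)) (G j) 0 = fact (j - 1)"
    and "(deriv ^^ j) (G j) 0 = fact j / 2"
    and "(deriv ^^ (j + 1)) (G j) 0 = fact (j + 1) / 12"
    and "(deriv ^^ (j + 2)) (G j) 0 = 0"
  using higher_deriv_G_0[OF assms, of "j - 1"] higher_deriv_G_0[OF assms, of j]
    higher_deriv_G_0[OF assms, of "j + 1"] higher_deriv_G_0[OF assms, of "j + 2"] assms
  by (simp_all add: todd_coeff_0 todd_coeff_1 todd_coeff_2 todd_coeff_3 flip: One_nat_def)

definition f_maclaurin_coeff :: "nat \<Rightarrow> nat \<Rightarrow> real" where
  "f_maclaurin_coeff j i = (-1) ^ (i + 1) * real (i + 1) * real (i + 2) * fact (j + i) *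
      (\<Sum>q = 0..i + 1. (-1) ^ q / real (q + 1) *
         real (Stirling (i + q + 1) q) / (fact (i + 1 - q) * fact (i + q + 1)))"

lemma higher_deriv_f_0:
  assumes "j \<ge> 1"
  shows "(deriv ^^ i) (f j) 0 / fact i = f_maclaurin_coeff j i"
proof -
  have "(deriv ^^ i) (f j) 0 = fact (j + i) * todd_coeff (i + 1)"
    using higher_deriv_G_0[OF assms, of "i + j"] by (simp add: f_def funpow_add add.commute)
  moreover have "fact (i + 1 + 1) = fact i * (real (i + 1) * real (i + 2))"
    by (simp add: algebra_simps)
  ultimately show ?thesis
    unfolding f_maclaurin_coeff_def todd_coeff_def by (simp add: ac_simps del: of_nat_Suc)
qed

lemma f_sums_maclaurin:
  assumes "j \<ge> 1" and "\<bar>v\<bar> < 2 * pi"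
  shows "(\<lambda>i. f_maclaurin_coeff j i * v ^ i) sums f j v"
proof -
  have "(deriv ^^ j) (G_complex j) holomorphic_on ball 0 (2 * pi)"
    by (rule holomorphic_higher_deriv[OF holomorphic_G_complex]) auto
  hence "(\<lambda>i. (deriv ^^ i) ((deriv ^^ j) (G_complex j)) 0 / fact i * (of_real v - 0) ^ i)
           sums (deriv ^^ j) (G_complex j) (of_real v)"
    by (rule holomorphic_power_series) (use assms in simp)
  moreover have "(deriv ^^ i) ((deriv ^^ j) (G_complex j)) 0 = of_real ((deriv ^^ i) (f j) 0)" for i
    using higher_deriv_G_eq_complex[OF assms(1), of 0 "i + j"] by (simp add: f_def funpow_add)
  moreover have "(deriv ^^ j) (G_complex j) (of_real v) = of_real (f j v)"
    using higher_deriv_G_eq_complex[OF assms] by (simp add: f_def)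
  ultimately have "(\<lambda>i. complex_of_real ((deriv ^^ i) (f j) 0 / fact i * v ^ i)) sums of_real (f j v)"
    by simp
  thus ?thesis
    by (simp only: sums_of_real_iff higher_deriv_f_0[OF assms(1)])
qed

theorem theorem3p1:
  shows "(\<forall>k::nat. (deriv ^^ k) F1 0 = (-1) ^ k / real (k + 1))
    \<and> (\<forall>j k::nat. j \<ge> 1 \<longrightarrow>
         (deriv ^^ k) (G j) 0 =
           (if k < j - 1 then 0
            else (let m = k + 1 - j in
                  (-1) ^ m * fact k * fact (m + 1) *
                  (\<Sum>q = 0..m. (-1) ^ q / real (q + 1) *
                     real (Stirling (m + q) q) / (fact (m - q) * fact (m + q))))))
    \<and> (\<forall>j::nat. j \<ge> 1 \<longrightarrow>
         (deriv ^^ (j - 1)) (G j) 0 = fact (j - 1)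
       \<and> (deriv ^^ j) (G j) 0 = fact j / 2
       \<and> f j 0 = fact j / 2
       \<and> (deriv ^^ (j + 1)) (G j) 0 = fact (j + 1) / 12
       \<and> deriv (f j) 0 = fact (j + 1) / 12
       \<and> (deriv ^^ (j + 2)) (G j) 0 = 0)
    \<and> (\<forall>j::nat. j \<ge> 1 \<longrightarrow>
         (let c = (\<lambda>i::nat. (-1) ^ (i + 1) * real (i + 1) * real (i + 2) * fact (j + i) *
                    (\<Sum>q = 0..i + 1. (-1) ^ q / real (q + 1) *
                       real (Stirling (i + q + 1) q) / (fact (i + 1 - q) * fact (i + q + 1))))
          in (\<forall>i. (deriv ^^ i) (f j) 0 / fact i = c i)
             \<and> (\<forall>v::real. \<bar>v\<bar> < 2 * pi \<longrightarrow> (\<lambda>i. c i * v ^ i) sums f j v)))"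
  unfolding Let_def f_maclaurin_coeff_def[symmetric]
proof (intro conjI allI impI)
  fix j :: nat assume j: "j \<ge> 1"
  show "(deriv ^^ (j - 1)) (G j) 0 = fact (j - 1)" "(deriv ^^ j) (G j) 0 = fact j / 2"
    "(deriv ^^ (j + 1)) (G j) 0 = fact (j + 1) / 12" "(deriv ^^ (j + 2)) (G j) 0 = 0"
    using j by (fact higher_deriv_G_0_low_orders)+
  show "f j 0 = fact j / 2"
    using higher_deriv_G_0_low_orders(2)[OF j] by (simp add: f_def)
  show "deriv (f j) 0 = fact (j + 1) / 12"
    using higher_deriv_G_0_low_orders(3)[OF j] by (simp add: f_def)
  show "(deriv ^^ i) (f j) 0 / fact i = f_maclaurin_coeff j i" for i
    using j by (rule higher_deriv_f_0)
  show "(\<lambda>i. f_maclaurin_coeff j i * v ^ i) sums f j v" if "\<bar>v\<bar> < 2 * pi" for v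
    using j that by (rule f_sums_maclaurin)
qed (simp_all add: higher_deriv_F1_0 higher_deriv_G_0 todd_coeff_def mult_ac)

end
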